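(* Let $\tau$ be a renewal process on $\mathbb N$ with $\tau_0=0$ on $(\Sigma,\mathcal E,\mathbf P)$, $\delta_n=\mathbf 1_{\{n\in\tau\}}$, and let $\eta=(\eta_k)_{k\in\mathbb N}$ be i.i.d. real random variables on $(\Omega,\mathcal F,\mathbb P)$. Fix $\beta>0$, $h\in\mathbb R$, assume $\mathbb E e^{\beta|\eta_0|}<\infty$, and let $\lambda(s)=\ln\mathbb E e^{s\eta_0}$. Let $n\ge1$ with $\mathbf P(n\in\tau)>0$ and $Z_n=\mathbf E\big[\exp\big(\sum_{k=1}^n(\beta\eta_k+h)\delta_k\big)\delta_n\big]$. Let $\mathcal F_0$ be the trivial $\sigma$-field, $\mathcal F_j=\sigma(\eta_i:1\le i\le j)$, $\mathbb E_j=\mathbb E(\cdot\mid\mathcal F_j)$, and $V_{n,j}=\mathbb E_j\ln Z_n-\mathbb E_{j-1}\ln Z_n$. Then for every $1\le j\le n$, $$\mathbb E_{j-1}\exp(|V_{n,j}|)\le K:=2\max(e^{h+\lambda(\beta)},1)\cdot\max(e^{-h+\lambda(-\beta)},1)\quad\text{a.s.}$$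
   Context: $\mathbf E$ is expectation with respect to $\mathbf P$ (renewal process, disorder fixed), $\mathbb E$ with respect to $\mathbb P$ (disorder). *)

theory Defs
  imports "HOL-Probability.Probability"
begin

text \<open>Renewal process: tau = set of partial sums of the i.i.d. inter-arrival times T i
  (values in enat, so that a defective/terminating renewal is allowed); tau_0 = 0
  corresponds to the empty partial sum. delta_n = indicator of n in tau.\<close>

definition renewal_delta :: "(nat \<Rightarrow> 's \<Rightarrow> enat) \<Rightarrow> nat \<Rightarrow> 's \<Rightarrow> real" where
  "renewal_delta T n \<sigma> = (if \<exists>m. (\<Sum>i<m. T i \<sigma>) = enat n then 1 else 0)"

definition partition_fn ::
  "'s measure \<Rightarrow> (nat \<Rightarrow> 's \<Rightarrow> enat) \<Rightarrow> (nat \<Rightarrow> 'w \<Rightarrow> real) \<Rightarrow> real \<Rightarrow> real \<Rightarrow> nat \<Rightarrow> 'w \<Rightarrow> real" where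
  "partition_fn P T \<eta> \<beta> h n \<omega> =
     (\<integral>\<sigma>. exp (\<Sum>k\<in>{1..n}. (\<beta> * \<eta> k \<omega> + h) * renewal_delta T k \<sigma>) * renewal_delta T n \<sigma> \<partial>P)"

definition disorder_filtration :: "'w measure \<Rightarrow> (nat \<Rightarrow> 'w \<Rightarrow> real) \<Rightarrow> nat \<Rightarrow> 'w measure" where
  "disorder_filtration Q \<eta> j =
     sigma (space Q) {\<eta> i -` A \<inter> space Q | i A. i \<in> {1..j} \<and> A \<in> sets borel}"

definition log_mgf :: "'w measure \<Rightarrow> ('w \<Rightarrow> real) \<Rightarrow> real \<Rightarrow> real" where
  "log_mgf Q X s = ln (\<integral>\<omega>. exp (s * X \<omega>) \<partial>Q)"

end

theory Submission
  imports Defs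
begin

text \<open>
  As a function of the disorder, ln Z_n is \<beta>-Lipschitz in each coordinate \<eta>_j: changing
  \<eta>_j to t multiplies every polymer weight by at most exp(\<beta> |t - \<eta>_j|). For i.i.d. disorder,
  E_j ln Z_n is ln Z_n with the coordinates after j integrated out, so V_{n,j} is an average of
  ln Z_n - \<integral> ln Z_n(\<eta>_j := t) d\<mu>(t), where \<mu> is the law of \<eta>_0; hence
  |V_{n,j}| \<le> \<integral> \<beta> |\<eta>_j - t| d\<mu>(t). By Jensen, exp |V_{n,j}| \<le> \<psi>(\<eta>_j) with
  \<psi>(s) = \<integral> exp(\<beta> |s - t|) d\<mu>(t), and since \<eta>_j is independent of F_{j-1},
  E_{j-1} \<psi>(\<eta>_j) = \<integral>\<integral> exp(\<beta> |s - t|) d\<mu> d\<mu> \<le> 2 E exp(\<beta> \<eta>_0) E exp(-\<beta> \<eta>_0) \<le> K.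
\<close>

section \<open>Conditional expectations given i.i.d. coordinates\<close>

definition sigma_vars :: "'w measure \<Rightarrow> (nat \<Rightarrow> 'w \<Rightarrow> real) \<Rightarrow> nat set \<Rightarrow> 'w measure" where
  "sigma_vars Q \<eta> I = sigma (space Q) {\<eta> i -` A \<inter> space Q | i A. i \<in> I \<and> A \<in> sets borel}"

lemma disorder_filtration_eq_sigma_vars: "disorder_filtration Q \<eta> j = sigma_vars Q \<eta> {1..j}"
  by (simp add: disorder_filtration_def sigma_vars_def)

locale iid_real_seq = prob_space Q for Q :: "'w measure" +
  fixes \<eta> :: "nat \<Rightarrow> 'w \<Rightarrow> real"
  assumes indep: "indep_vars (\<lambda>_. borel) \<eta> UNIV"
    and ident_distr: "\<And>i. distr Q borel (\<eta> i) = distr Q borel (\<eta> 0)"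
begin

definition law :: "real measure" where
  "law = distr Q borel (\<eta> 0)"

abbreviation prod_law :: "nat set \<Rightarrow> (nat \<Rightarrow> real) measure" where
  "prod_law S \<equiv> PiM S (\<lambda>_. law)"

definition coords :: "nat set \<Rightarrow> 'w \<Rightarrow> nat \<Rightarrow> real" where
  "coords S \<omega> = (\<lambda>i\<in>S. \<eta> i \<omega>)"

lemma measurable_eta[measurable]: "\<eta> i \<in> borel_measurable Q"
  using indep unfolding indep_vars_def by auto

lemma sets_law[simp, measurable_cong]: "sets law = sets borel"
  and space_law[simp]: "space law = UNIV"
  by (auto simp: law_def)

lemma distr_eta: "distr Q borel (\<eta> i) = law"
  using ident_distr by (simp add: law_def)

lemma prob_space_law: "prob_space law"
  unfolding law_def by (rule prob_space_distr) simp

lemma prob_space_prod_law: "prob_space (prod_law S)"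
  by (rule prob_space_PiM) (rule prob_space_law)

sublocale law: product_sigma_finite "\<lambda>_::nat. law"
  unfolding product_sigma_finite_def using prob_space_law prob_space_imp_sigma_finite by blast

lemma measurable_coords[measurable]: "coords S \<in> measurable Q (prod_law S)"
  unfolding coords_def by (rule measurable_restrict) simp

lemma distr_coords:
  assumes "finite S"
  shows "distr Q (prod_law S) (coords S) = prod_law S"
proof -
  have distr_nonempty: "distr Q (prod_law S') (coords S') = prod_law S'" if "S' \<noteq> {}" for S'
  proof -
    have "distr Q (PiM S' (\<lambda>_. borel)) (\<lambda>x. \<lambda>i\<in>S'. \<eta> i x) = PiM S' (\<lambda>i. distr Q borel (\<eta> i))"
      by (rule iffD1[OF indep_vars_iff_distr_eq_PiM[OF that measurable_eta]])
         (rule indep_vars_subset[OF indep], simp)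
    moreover have "distr Q (PiM S' (\<lambda>_. borel)) (\<lambda>x. \<lambda>i\<in>S'. \<eta> i x) = distr Q (prod_law S') (coords S')"
      by (rule distr_cong[OF refl sets_PiM_cong]) (simp_all add: coords_def)
    ultimately show ?thesis by (simp add: distr_eta)
  qed
  interpret product_prob_space "\<lambda>_::nat. law" S
    by (simp add: product_prob_space_def product_prob_space_axioms_def prob_space_law
        law.product_sigma_finite_axioms)
  \<comment> \<open>The product characterisation of independence needs a nonempty index set,
    so the general case is obtained by restriction from \<open>insert 0 S\<close>.\<close>
  let ?N = "insert 0 S"
  have "prod_law S = distr (prod_law ?N) (prod_law S) (\<lambda>f. restrict f S)"
    using assms by (intro distr_restrict) auto
  also have "\<dots> = distr (distr Q (prod_law ?N) (coords ?N)) (prod_law S) (\<lambda>f. restrict f S)"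
    by (subst distr_nonempty) auto
  also have "\<dots> = distr Q (prod_law S) (coords S)"
    by (subst distr_distr) (auto intro!: distr_cong measurable_restrict_subset simp: coords_def)
  finally show ?thesis by simp
qed

lemma distr_component:
  "k \<in> S \<Longrightarrow> distr (prod_law S) law (\<lambda>y. y k) = law"
  by (rule distr_PiM_component) (rule prob_space_law)

lemma integrable_component:
  fixes f :: "real \<Rightarrow> 'b::{banach, second_countable_topology}"
  assumes "k \<in> S" and f: "integrable law f"
  shows "integrable (prod_law S) (\<lambda>y. f (y k))"
  using f distr_component[OF assms(1)] integrable_distr_eq[of "\<lambda>y. y k" "prod_law S" law f]
  by (simp add: assms(1))

lemma integral_component:
  fixes f :: "real \<Rightarrow> 'b::{banach, second_countable_topology}"
  assumes "k \<in> S" and f: "integrable law f"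
  shows "(\<integral>y. f (y k) \<partial>prod_law S) = (\<integral>t. f t \<partial>law)"
  using f distr_component[OF assms(1)] integral_distr[of "\<lambda>y. y k" "prod_law S" law f]
  by (simp add: assms(1))

lemma space_sigma_vars[simp]: "space (sigma_vars Q \<eta> I) = space Q"
  unfolding sigma_vars_def by (rule space_measure_of) auto

lemma sets_sigma_vars:
  "sets (sigma_vars Q \<eta> I) = {coords I -` A \<inter> space Q | A. A \<in> sets (prod_law I)}"
proof -
  let ?G = "{\<eta> i -` A \<inter> space Q | i A. i \<in> I \<and> A \<in> sets borel}"
  let ?R = "{{f\<in>\<Pi>\<^sub>E i\<in>I. space law. f i \<in> A} | i A. i \<in> I \<and> A \<in> sets law}"
  have eta_vimage: "\<eta> i -` A \<inter> space Q = coords I -` {f\<in>\<Pi>\<^sub>E i\<in>I. space law. f i \<in> A} \<inter> space Q"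
    if "i \<in> I" for i A
    using that by (auto simp: coords_def)
  have "sets (sigma_vars Q \<eta> I) = sigma_sets (space Q) ?G"
    unfolding sigma_vars_def by (rule sets_measure_of) auto
  also have "?G = {coords I -` A \<inter> space Q | A. A \<in> ?R}"
  proof (intro set_eqI iffI)
    fix X assume "X \<in> ?G"
    then obtain i A where X: "X = \<eta> i -` A \<inter> space Q" "i \<in> I" "A \<in> sets borel" by blast
    have "X = coords I -` {f\<in>\<Pi>\<^sub>E i\<in>I. space law. f i \<in> A} \<inter> space Q"
      unfolding X(1) by (rule eta_vimage[OF X(2)])
    moreover have "{f\<in>\<Pi>\<^sub>E i\<in>I. space law. f i \<in> A} \<in> ?R" using X(2,3) by auto
    ultimately show "X \<in> {coords I -` A \<inter> space Q | A. A \<in> ?R}" by blast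
  next
    fix X assume "X \<in> {coords I -` A \<inter> space Q | A. A \<in> ?R}"
    then obtain i A where X: "X = coords I -` {f\<in>\<Pi>\<^sub>E i\<in>I. space law. f i \<in> A} \<inter> space Q"
      "i \<in> I" "A \<in> sets borel" by auto
    have "X = \<eta> i -` A \<inter> space Q"
      unfolding X(1) by (rule eta_vimage[OF X(2), symmetric])
    with X(2,3) show "X \<in> ?G" by blast
  qed
  also have "sigma_sets (space Q) \<dots> = {coords I -` A \<inter> space Q | A. A \<in> sigma_sets (\<Pi>\<^sub>E i\<in>I. space law) ?R}"
    by (rule sigma_sets_vimage_commute[symmetric]) (auto simp: coords_def)
  also have "sigma_sets (\<Pi>\<^sub>E i\<in>I. space law) ?R = sets (prod_law I)"
    by (rule sets_PiM_single[symmetric])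
  finally show ?thesis .
qed

lemma measurable_coords_sigma_vars: "coords I \<in> measurable (sigma_vars Q \<eta> I) (prod_law I)"
  unfolding measurable_def using measurable_space[OF measurable_coords]
  by (auto simp: sets_sigma_vars)

lemma finite_measure_subalgebra_sigma_vars: "finite_measure_subalgebra Q (sigma_vars Q \<eta> I)"
  unfolding finite_measure_subalgebra_def finite_measure_subalgebra_axioms_def subalgebra_def
  using measurable_sets[OF measurable_coords] finite_measure_axioms by (auto simp: sets_sigma_vars)

lemma integrable_integral_merge:
  fixes g :: "(nat \<Rightarrow> real) \<Rightarrow> real"
  assumes N: "finite N" and IN: "I \<subseteq> N" and g: "integrable (prod_law N) g"
  shows "integrable (prod_law I) (\<lambda>x. \<integral>y. g (merge I (N - I) (x, y)) \<partial>prod_law (N - I))"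
proof -
  have disj: "I \<inter> (N - I) = {}" and fin: "finite I" "finite (N - I)"
    using IN N by (auto intro: finite_subset)
  interpret pair_sigma_finite "prod_law I" "prod_law (N - I)"
    by (intro pair_sigma_finite.intro prob_space_imp_sigma_finite prob_space_prod_law)
  have "integrable (prod_law I \<Otimes>\<^sub>M prod_law (N - I)) (\<lambda>z. g (merge I (N - I) z))"
    by (rule integrable_distr[OF measurable_merge])
       (subst law.distr_merge[OF disj fin], use IN g in \<open>simp add: Un_absorb1\<close>)
  then show ?thesis by (rule integrable_fst')
qed

lemma set_integral_coords_merge:
  fixes g :: "(nat \<Rightarrow> real) \<Rightarrow> real"
  assumes N: "finite N" and IN: "I \<subseteq> N" and g: "integrable (prod_law N) g"
    and S[measurable]: "S \<in> sets (prod_law I)"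
  defines "h \<equiv> \<lambda>x. \<integral>y. g (merge I (N - I) (x, y)) \<partial>prod_law (N - I)"
  shows "(\<integral>\<omega>\<in>coords I -` S \<inter> space Q. g (coords N \<omega>) \<partial>Q)
       = (\<integral>\<omega>\<in>coords I -` S \<inter> space Q. h (coords I \<omega>) \<partial>Q)"
proof -
  have disj: "I \<inter> (N - I) = {}" and fin: "finite I" "finite (N - I)"
    using IN N by (auto intro: finite_subset)
  have [measurable]: "g \<in> borel_measurable (prod_law N)" using g by auto
  have [measurable]: "h \<in> borel_measurable (prod_law I)"
    using integrable_integral_merge[OF N IN g] unfolding h_def by auto
  define gS where "gS x = indicator S (restrict x I) * g x" for x
  have [measurable]: "gS \<in> borel_measurable (prod_law N)"
    unfolding gS_def using measurable_restrict_subset[OF IN] by measurable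
  have gS_int: "integrable (prod_law N) gS"
    by (rule Bochner_Integration.integrable_bound[OF g]) (auto simp: gS_def indicator_def)
  have restrict_coords: "restrict (coords N \<omega>) I = coords I \<omega>" for \<omega>
    using IN by (auto simp: coords_def fun_eq_iff)
  have "(\<integral>\<omega>\<in>coords I -` S \<inter> space Q. g (coords N \<omega>) \<partial>Q) = (\<integral>\<omega>. gS (coords N \<omega>) \<partial>Q)"
    unfolding set_lebesgue_integral_def
    by (rule Bochner_Integration.integral_cong) (auto simp: gS_def restrict_coords indicator_def)
  also have "\<dots> = (\<integral>x. gS x \<partial>prod_law N)"
    by (subst distr_coords[OF N, symmetric]) (simp add: integral_distr)
  also have "\<dots> = (\<integral>x. (\<integral>y. gS (merge I (N - I) (x, y)) \<partial>prod_law (N - I)) \<partial>prod_law I)"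
    using law.product_integral_fold[OF disj fin] gS_int IN by (simp add: Un_absorb1)
  also have "\<dots> = (\<integral>x. indicator S x * h x \<partial>prod_law I)"
  proof (rule Bochner_Integration.integral_cong[OF refl])
    fix x assume x: "x \<in> space (prod_law I)"
    have "restrict (merge I (N - I) (x, y)) I = x" for y
      using x by (auto simp: space_PiM PiE_def extensional_def fun_eq_iff merge_def)
    then show "(\<integral>y. gS (merge I (N - I) (x, y)) \<partial>prod_law (N - I)) = indicator S x * h x"
      by (simp add: gS_def h_def)
  qed
  also have "\<dots> = (\<integral>\<omega>. indicator S (coords I \<omega>) * h (coords I \<omega>) \<partial>Q)"
    by (subst distr_coords[OF fin(1), symmetric]) (simp add: integral_distr)
  also have "\<dots> = (\<integral>\<omega>\<in>coords I -` S \<inter> space Q. h (coords I \<omega>) \<partial>Q)"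
    unfolding set_lebesgue_integral_def
    by (rule Bochner_Integration.integral_cong) (auto simp: indicator_def)
  finally show ?thesis .
qed

lemma cond_exp_coords:
  fixes g :: "(nat \<Rightarrow> real) \<Rightarrow> real"
  assumes N: "finite N" and IN: "I \<subseteq> N" and g: "integrable (prod_law N) g"
  shows "AE \<omega> in Q. real_cond_exp Q (sigma_vars Q \<eta> I) (\<lambda>\<omega>. g (coords N \<omega>)) \<omega> =
           (\<integral>y. g (merge I (N - I) (coords I \<omega>, y)) \<partial>prod_law (N - I))"
proof -
  interpret finite_measure_subalgebra Q "sigma_vars Q \<eta> I"
    by (rule finite_measure_subalgebra_sigma_vars)
  define h where "h x = (\<integral>y. g (merge I (N - I) (x, y)) \<partial>prod_law (N - I))" for x
  have "finite I" using IN N by (rule finite_subset)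
  have h: "integrable (prod_law I) h"
    unfolding h_def by (rule integrable_integral_merge[OF N IN g])
  then have [measurable]: "h \<in> borel_measurable (prod_law I)" by auto
  have [measurable]: "g \<in> borel_measurable (prod_law N)" using g by auto
  have "AE \<omega> in Q. real_cond_exp Q (sigma_vars Q \<eta> I) (\<lambda>\<omega>. g (coords N \<omega>)) \<omega> = h (coords I \<omega>)"
  proof (rule real_cond_exp_charact)
    show "integrable Q (\<lambda>\<omega>. g (coords N \<omega>))"
      using g by (subst (asm) distr_coords[OF N, symmetric]) (simp add: integrable_distr_eq)
    show "integrable Q (\<lambda>\<omega>. h (coords I \<omega>))"
      using h by (subst (asm) distr_coords[OF \<open>finite I\<close>, symmetric]) (simp add: integrable_distr_eq)
    show "(\<lambda>\<omega>. h (coords I \<omega>)) \<in> borel_measurable (sigma_vars Q \<eta> I)"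
      by (rule measurable_compose[OF measurable_coords_sigma_vars]) simp
    fix A assume "A \<in> sets (sigma_vars Q \<eta> I)"
    then obtain S where "S \<in> sets (prod_law I)" and "A = coords I -` S \<inter> space Q"
      unfolding sets_sigma_vars by blast
    then show "(\<integral>\<omega>\<in>A. g (coords N \<omega>) \<partial>Q) = (\<integral>\<omega>\<in>A. h (coords I \<omega>) \<partial>Q)"
      using set_integral_coords_merge[OF N IN g] by (simp add: h_def)
  qed
  then show ?thesis by (simp add: h_def)
qed

lemma cond_exp_indep_coord:
  assumes "finite I" "j \<notin> I" and f: "integrable law f"
  shows "AE \<omega> in Q. real_cond_exp Q (sigma_vars Q \<eta> I) (\<lambda>\<omega>. f (\<eta> j \<omega>)) \<omega> = (\<integral>t. f t \<partial>law)"
proof -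
  have "AE \<omega> in Q. real_cond_exp Q (sigma_vars Q \<eta> I) (\<lambda>\<omega>. f (coords (insert j I) \<omega> j)) \<omega> =
          (\<integral>y. f (merge I (insert j I - I) (coords I \<omega>, y) j) \<partial>prod_law (insert j I - I))"
    using assms by (intro cond_exp_coords integrable_component) auto
  moreover have "(\<integral>y. f (merge I (insert j I - I) (coords I \<omega>, y) j) \<partial>prod_law (insert j I - I)) =
      (\<integral>t. f t \<partial>law)" for \<omega>
    using assms by (simp add: merge_def integral_component)
  ultimately show ?thesis by (simp add: coords_def)
qed

end

section \<open>Laws with an exponential moment\<close>

locale exp_moment = prob_space M for M :: "real measure" +
  fixes \<beta> :: real
  assumes sets_eq_borel[measurable_cong]: "sets M = sets borel"
    and beta_pos: "\<beta> > 0"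
    and integrable_exp_abs: "integrable M (\<lambda>t. exp (\<beta> * \<bar>t\<bar>))"
begin

lemma integrable_exp_dominated:
  fixes f :: "real \<Rightarrow> real"
  assumes "f \<in> borel_measurable borel" and "\<And>t. \<bar>f t\<bar> \<le> c * exp (\<beta> * \<bar>t\<bar>) + d"
  shows "integrable M f"
proof (rule Bochner_Integration.integrable_bound)
  show "integrable M (\<lambda>t. c * exp (\<beta> * \<bar>t\<bar>) + d)"
    using integrable_exp_abs by simp
  show "AE t in M. norm (f t) \<le> norm (c * exp (\<beta> * \<bar>t\<bar>) + d)"
    using assms(2) by (auto intro: order_trans[OF _ abs_ge_self])
qed (use assms(1) in simp)

lemma integrable_exp_mult:
  assumes "\<bar>s\<bar> \<le> \<beta>"
  shows "integrable M (\<lambda>t. exp (s * t))"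
proof (rule integrable_exp_dominated[where c=1 and d=0])
  fix t
  have "s * t \<le> \<bar>s\<bar> * \<bar>t\<bar>"
    by (metis abs_ge_self abs_mult)
  also have "\<dots> \<le> \<beta> * \<bar>t\<bar>"
    using assms by (rule mult_right_mono) simp
  finally show "\<bar>exp (s * t)\<bar> \<le> 1 * exp (\<beta> * \<bar>t\<bar>) + 0" by simp
qed simp

lemma integrable_exp_beta[simp]:
  "integrable M (\<lambda>t. exp (\<beta> * t))" "integrable M (\<lambda>t. exp (- (\<beta> * t)))"
  using integrable_exp_mult[of \<beta>] integrable_exp_mult[of "- \<beta>"] beta_pos by simp_all

lemma integrable_abs_diff: "integrable M (\<lambda>t. \<bar>s - t\<bar>)"
proof (rule integrable_exp_dominated[where c="1 / \<beta>" and d="\<bar>s\<bar>"])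
  fix t
  have "\<beta> * \<bar>t\<bar> \<le> exp (\<beta> * \<bar>t\<bar>)"
    using exp_ge_add_one_self[of "\<beta> * \<bar>t\<bar>"] by linarith
  then have "\<bar>t\<bar> \<le> 1 / \<beta> * exp (\<beta> * \<bar>t\<bar>)"
    using beta_pos by (simp add: field_simps)
  then show "\<bar>\<bar>s - t\<bar>\<bar> \<le> 1 / \<beta> * exp (\<beta> * \<bar>t\<bar>) + \<bar>s\<bar>" by linarith
qed simp

lemma integrable_exp_abs_diff: "integrable M (\<lambda>t. exp (\<beta> * \<bar>s - t\<bar>))"
proof (rule integrable_exp_dominated[where c="exp (\<beta> * \<bar>s\<bar>)" and d=0])
  fix t
  have "\<beta> * \<bar>s - t\<bar> \<le> \<beta> * \<bar>s\<bar> + \<beta> * \<bar>t\<bar>"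
    using beta_pos abs_triangle_ineq4[of s t] by (simp add: distrib_left[symmetric])
  then show "\<bar>exp (\<beta> * \<bar>s - t\<bar>)\<bar> \<le> exp (\<beta> * \<bar>s\<bar>) * exp (\<beta> * \<bar>t\<bar>) + 0"
    by (simp add: exp_add[symmetric])
qed simp

lemma lipschitz_integrable:
  fixes f :: "real \<Rightarrow> real"
  assumes f: "\<beta>-lipschitz_on UNIV f"
  shows "integrable M f"
proof (rule Bochner_Integration.integrable_bound[where f="\<lambda>t. \<bar>f 0\<bar> + \<beta> * \<bar>0 - t\<bar>"])
  show "integrable M (\<lambda>t. \<bar>f 0\<bar> + \<beta> * \<bar>0 - t\<bar>)"
    using integrable_abs_diff[of 0] by simp
  show "f \<in> borel_measurable M"
    using borel_measurable_continuous_onI[OF lipschitz_on_continuous_on[OF f]] by simp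
  show "AE t in M. norm (f t) \<le> norm (\<bar>f 0\<bar> + \<beta> * \<bar>0 - t\<bar>)"
  proof (rule AE_I2)
    fix t
    have "\<bar>f t - f 0\<bar> \<le> \<beta> * \<bar>t\<bar>"
      using lipschitz_onD[OF f, of t 0] by (simp add: dist_real_def)
    then show "norm (f t) \<le> norm (\<bar>f 0\<bar> + \<beta> * \<bar>0 - t\<bar>)"
      using beta_pos by simp
  qed
qed

lemma lipschitz_dist_integral_le:
  fixes f :: "real \<Rightarrow> real"
  assumes f: "\<beta>-lipschitz_on UNIV f"
  shows "\<bar>f s - (\<integral>t. f t \<partial>M)\<bar> \<le> (\<integral>t. \<beta> * \<bar>s - t\<bar> \<partial>M)"
proof -
  have "f s - (\<integral>t. f t \<partial>M) = (\<integral>t. f s - f t \<partial>M)"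
    using lipschitz_integrable[OF f] by (simp add: prob_space)
  also have "\<bar>\<dots>\<bar> \<le> (\<integral>t. \<bar>f s - f t\<bar> \<partial>M)"
    by (rule integral_abs_bound)
  also have "\<dots> \<le> (\<integral>t. \<beta> * \<bar>s - t\<bar> \<partial>M)"
    using lipschitz_integrable[OF f] integrable_abs_diff[of s] lipschitz_onD[OF f]
    by (intro integral_mono) (auto simp: dist_real_def)
  finally show ?thesis .
qed

definition exp_dist_moment :: "real \<Rightarrow> real" where
  "exp_dist_moment s = (\<integral>t. exp (\<beta> * \<bar>s - t\<bar>) \<partial>M)"

lemma exp_integral_le_exp_dist_moment: "exp (\<integral>t. \<beta> * \<bar>s - t\<bar> \<partial>M) \<le> exp_dist_moment s"
  unfolding exp_dist_moment_def
  using integrable_abs_diff[of s] integrable_exp_abs_diff[of s] exp_convex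
  by (intro jensens_inequality[where I=UNIV]) auto

lemma measurable_exp_dist_moment[measurable]: "exp_dist_moment \<in> borel_measurable borel"
proof -
  interpret sigma_finite_measure M by (rule prob_space_imp_sigma_finite) (rule prob_space_axioms)
  have "(\<lambda>(s, t). exp (\<beta> * \<bar>s - t\<bar>)) \<in> borel_measurable (borel \<Otimes>\<^sub>M M)"
    by measurable
  then show ?thesis
    unfolding exp_dist_moment_def by (rule borel_measurable_lebesgue_integral)
qed

lemma exp_dist_moment_le:
  "exp_dist_moment s \<le> exp (\<beta> * s) * (\<integral>t. exp (- \<beta> * t) \<partial>M) + exp (- \<beta> * s) * (\<integral>t. exp (\<beta> * t) \<partial>M)"
proof -
  have "exp (\<beta> * \<bar>s - t\<bar>) \<le> exp (\<beta> * s) * exp (- \<beta> * t) + exp (- \<beta> * s) * exp (\<beta> * t)" for t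
    by (cases "s \<le> t") (auto simp: exp_add[symmetric] algebra_simps add_increasing add_increasing2)
  then have "exp_dist_moment s \<le> (\<integral>t. exp (\<beta> * s) * exp (- \<beta> * t) + exp (- \<beta> * s) * exp (\<beta> * t) \<partial>M)"
    unfolding exp_dist_moment_def by (intro integral_mono integrable_exp_abs_diff) auto
  also have "\<dots> = exp (\<beta> * s) * (\<integral>t. exp (- \<beta> * t) \<partial>M) + exp (- \<beta> * s) * (\<integral>t. exp (\<beta> * t) \<partial>M)"
    by simp
  finally show ?thesis .
qed

lemma integrable_exp_dist_moment: "integrable M exp_dist_moment"
proof (rule Bochner_Integration.integrable_bound)
  let ?g = "\<lambda>s. exp (\<beta> * s) * (\<integral>t. exp (- \<beta> * t) \<partial>M) + exp (- \<beta> * s) * (\<integral>t. exp (\<beta> * t) \<partial>M)"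
  show "integrable M ?g"
    by simp
  have "0 \<le> exp_dist_moment s" for s
    by (simp add: exp_dist_moment_def)
  moreover have "0 \<le> ?g s" for s
    by simp
  ultimately show "AE s in M. norm (exp_dist_moment s) \<le> norm (?g s)"
    using exp_dist_moment_le by simp
qed simp

lemma integral_exp_dist_moment_le:
  "(\<integral>s. exp_dist_moment s \<partial>M) \<le> 2 * (\<integral>t. exp (\<beta> * t) \<partial>M) * (\<integral>t. exp (- \<beta> * t) \<partial>M)"
proof -
  have "(\<integral>s. exp_dist_moment s \<partial>M)
      \<le> (\<integral>s. exp (\<beta> * s) * (\<integral>t. exp (- \<beta> * t) \<partial>M) + exp (- \<beta> * s) * (\<integral>t. exp (\<beta> * t) \<partial>M) \<partial>M)"
    using exp_dist_moment_le by (intro integral_mono integrable_exp_dist_moment) simp_all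
  also have "\<dots> = 2 * (\<integral>t. exp (\<beta> * t) \<partial>M) * (\<integral>t. exp (- \<beta> * t) \<partial>M)"
    by simp
  finally show ?thesis .
qed

end

section \<open>The pinned partition function as a function of the disorder\<close>

lemma ln_le_add_ln:
  fixes a b c :: real
  assumes "0 < a" "0 < b" "a \<le> exp c * b"
  shows "ln a \<le> c + ln b"
proof -
  have "ln a \<le> ln (exp c * b)"
    using assms by (subst ln_le_cancel_iff) auto
  also have "\<dots> = c + ln b"
    using assms(2) by (simp add: ln_mult)
  finally show ?thesis .
qed

lemma renewal_delta_cases: "renewal_delta T k \<sigma> = 0 \<or> renewal_delta T k \<sigma> = 1"
  by (simp add: renewal_delta_def)

lemma renewal_delta_nonneg[simp]: "renewal_delta T k \<sigma> \<ge> 0"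
  and renewal_delta_le_1[simp]: "renewal_delta T k \<sigma> \<le> 1"
  by (simp_all add: renewal_delta_def)

lemma measurable_renewal_delta[measurable]:
  assumes [measurable]: "\<And>i. T i \<in> measurable M (count_space UNIV)"
  shows "renewal_delta T k \<in> borel_measurable M"
proof -
  have [measurable]: "(\<lambda>\<sigma>. \<Sum>i<m. T i \<sigma>) \<in> measurable M (count_space UNIV)" for m
  proof (induction m)
    case (Suc m)
    have "(\<lambda>\<sigma>. (\<lambda>a. a + T m \<sigma>) (\<Sum>i<m. T i \<sigma>)) \<in> measurable M (count_space UNIV)"
      by (rule measurable_compose_countable[OF _ Suc]) simp
    then show ?case by simp
  qed simp
  have "Measurable.pred M (\<lambda>\<sigma>. \<exists>m. (\<Sum>i<m. T i \<sigma>) = enat k)"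
    by measurable
  then show ?thesis unfolding renewal_delta_def[abs_def] by measurable
qed

locale renewal_partition = prob_space P for P :: "'s measure" +
  fixes T :: "nat \<Rightarrow> 's \<Rightarrow> enat" and \<beta> h :: real and n :: nat
  assumes measurable_T[measurable]: "\<And>i. T i \<in> measurable P (count_space UNIV)"
    and beta_nonneg: "\<beta> \<ge> 0"
    and pinning_pos: "measure P {\<sigma> \<in> space P. renewal_delta T n \<sigma> = 1} > 0"
begin

definition energy :: "(nat \<Rightarrow> real) \<Rightarrow> 's \<Rightarrow> real" where
  "energy x \<sigma> = (\<Sum>k\<in>{1..n}. (\<beta> * x k + h) * renewal_delta T k \<sigma>)"

definition energy_bound :: "(nat \<Rightarrow> real) \<Rightarrow> real" where
  "energy_bound x = \<beta> * (\<Sum>k\<in>{1..n}. \<bar>x k\<bar>) + n * \<bar>h\<bar>"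

definition Z :: "(nat \<Rightarrow> real) \<Rightarrow> real" where
  "Z x = (\<integral>\<sigma>. exp (energy x \<sigma>) * renewal_delta T n \<sigma> \<partial>P)"

definition pinning_prob :: real where
  "pinning_prob = measure P {\<sigma> \<in> space P. renewal_delta T n \<sigma> = 1}"

lemma partition_fn_eq_Z: "partition_fn P T \<eta> \<beta> h n \<omega> = Z (\<lambda>k. \<eta> k \<omega>)"
  by (simp add: partition_fn_def Z_def energy_def)

lemma Z_local: "(\<And>k. k \<in> {1..n} \<Longrightarrow> x k = x' k) \<Longrightarrow> Z x = Z x'"
  unfolding Z_def energy_def by (metis (no_types, lifting) sum.cong)

lemma abs_energy_le: "\<bar>energy x \<sigma>\<bar> \<le> energy_bound x"
proof -
  have "\<bar>energy x \<sigma>\<bar> \<le> (\<Sum>k\<in>{1..n}. \<bar>(\<beta> * x k + h) * renewal_delta T k \<sigma>\<bar>)"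
    unfolding energy_def by (rule sum_abs)
  also have "\<dots> \<le> (\<Sum>k\<in>{1..n}. \<beta> * \<bar>x k\<bar> + \<bar>h\<bar>)"
  proof (rule sum_mono)
    fix k
    have "\<bar>(\<beta> * x k + h) * renewal_delta T k \<sigma>\<bar> \<le> \<bar>\<beta> * x k + h\<bar>"
      using renewal_delta_cases[of T k \<sigma>] by auto
    also have "\<dots> \<le> \<beta> * \<bar>x k\<bar> + \<bar>h\<bar>"
      using beta_nonneg by (simp add: abs_mult abs_triangle_ineq[THEN order_trans])
    finally show "\<bar>(\<beta> * x k + h) * renewal_delta T k \<sigma>\<bar> \<le> \<beta> * \<bar>x k\<bar> + \<bar>h\<bar>" .
  qed
  also have "\<dots> = energy_bound x"
    by (simp add: energy_bound_def sum.distrib sum_distrib_left)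
  finally show ?thesis .
qed

lemma energy_upd_le: "j \<in> {1..n} \<Longrightarrow> energy (x(j := t)) \<sigma> \<le> energy x \<sigma> + \<beta> * \<bar>t - x j\<bar>"
proof -
  assume j: "j \<in> {1..n}"
  have "energy (x(j := t)) \<sigma> = energy x \<sigma> + \<beta> * (t - x j) * renewal_delta T j \<sigma>"
  proof -
    have "energy y \<sigma> = (\<beta> * y j + h) * renewal_delta T j \<sigma>
        + (\<Sum>k\<in>{1..n} - {j}. (\<beta> * y k + h) * renewal_delta T k \<sigma>)" for y
      unfolding energy_def using j by (subst sum.remove[of _ j]) auto
    then show ?thesis by (simp add: algebra_simps)
  qed
  moreover have "\<beta> * (t - x j) * renewal_delta T j \<sigma> \<le> \<beta> * \<bar>t - x j\<bar>"
    using renewal_delta_cases[of T j \<sigma>] beta_nonneg by (auto simp: mult_left_mono)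
  ultimately show ?thesis by simp
qed

lemma measurable_weight[measurable]: "(\<lambda>\<sigma>. exp (energy x \<sigma>) * renewal_delta T n \<sigma>) \<in> borel_measurable P"
  unfolding energy_def by measurable

lemma weight_le: "exp (energy x \<sigma>) * renewal_delta T n \<sigma> \<le> exp (energy_bound x)"
proof -
  have "exp (energy x \<sigma>) * renewal_delta T n \<sigma> \<le> exp (energy x \<sigma>)"
    by (simp add: mult_left_le)
  also have "\<dots> \<le> exp (energy_bound x)"
    using abs_energy_le[of x \<sigma>] by simp
  finally show ?thesis .
qed

lemma integrable_weight: "integrable P (\<lambda>\<sigma>. exp (energy x \<sigma>) * renewal_delta T n \<sigma>)"
  by (rule integrable_const_bound[where B="exp (energy_bound x)"])
     (simp_all add: weight_le)

lemma pinning_prob_eq_expectation: "pinning_prob = (\<integral>\<sigma>. renewal_delta T n \<sigma> \<partial>P)"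
proof -
  have "(\<integral>\<sigma>. renewal_delta T n \<sigma> \<partial>P) = (\<integral>\<sigma>. indicator {\<sigma> \<in> space P. renewal_delta T n \<sigma> = 1} \<sigma> \<partial>P)"
    by (rule Bochner_Integration.integral_cong) (auto simp: indicator_def renewal_delta_def)
  then show ?thesis by (simp add: pinning_prob_def)
qed

lemma Z_bounds: "exp (- energy_bound x) * pinning_prob \<le> Z x" "Z x \<le> exp (energy_bound x)"
proof -
  have "exp (- energy_bound x) * pinning_prob = (\<integral>\<sigma>. exp (- energy_bound x) * renewal_delta T n \<sigma> \<partial>P)"
    by (simp add: pinning_prob_eq_expectation)
  also have "\<dots> \<le> Z x"
    unfolding Z_def
  proof (rule integral_mono[OF _ integrable_weight])
    show "integrable P (\<lambda>\<sigma>. exp (- energy_bound x) * renewal_delta T n \<sigma>)"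
      by (rule integrable_const_bound[where B="exp (- energy_bound x)"]) (simp_all add: mult_left_le)
    show "exp (- energy_bound x) * renewal_delta T n \<sigma> \<le> exp (energy x \<sigma>) * renewal_delta T n \<sigma>" for \<sigma>
      using abs_energy_le[of x \<sigma>] by (intro mult_right_mono) auto
  qed
  finally show "exp (- energy_bound x) * pinning_prob \<le> Z x" .
  have "Z x \<le> (\<integral>\<sigma>. exp (energy_bound x) \<partial>P)"
    unfolding Z_def by (rule integral_mono) (simp_all add: integrable_weight weight_le)
  then show "Z x \<le> exp (energy_bound x)" by (simp add: prob_space)
qed

lemma pinning_prob_pos: "pinning_prob > 0"
  using pinning_pos by (simp add: pinning_prob_def)

lemma Z_pos: "Z x > 0"
  using Z_bounds(1)[of x] pinning_prob_pos by (smt (verit) exp_gt_zero mult_pos_pos)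

lemma abs_ln_Z_le: "\<bar>ln (Z x)\<bar> \<le> energy_bound x - ln pinning_prob"
proof -
  have "ln (Z x) \<le> energy_bound x"
    using ln_le_add_ln[of "Z x" 1 "energy_bound x"] Z_pos[of x] Z_bounds(2)[of x] by simp
  moreover have "ln (exp (- energy_bound x) * pinning_prob) \<le> ln (Z x)"
    using Z_bounds(1)[of x] Z_pos[of x] pinning_prob_pos by simp
  then have "- energy_bound x + ln pinning_prob \<le> ln (Z x)"
    using pinning_prob_pos by (simp add: ln_mult)
  moreover have "ln pinning_prob \<le> 0"
    using pinning_prob_pos by (simp add: pinning_prob_def)
  ultimately show ?thesis by simp
qed

lemma Z_upd_le:
  assumes "j \<in> {1..n}"
  shows "Z (x(j := t)) \<le> exp (\<beta> * \<bar>t - x j\<bar>) * Z x"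
proof -
  have "exp (energy (x(j := t)) \<sigma>) * renewal_delta T n \<sigma>
      \<le> exp (\<beta> * \<bar>t - x j\<bar>) * (exp (energy x \<sigma>) * renewal_delta T n \<sigma>)" for \<sigma>
    using energy_upd_le[OF assms, of x t \<sigma>]
    by (simp add: mult.assoc[symmetric] exp_add[symmetric] add.commute mult_right_mono)
  then show ?thesis
    unfolding Z_def
    by (subst integral_mult_right_zero[symmetric], intro integral_mono)
       (simp_all add: integrable_weight)
qed

lemma lipschitz_ln_Z_coord:
  assumes "j \<in> {1..n}"
  shows "\<beta>-lipschitz_on UNIV (\<lambda>t. ln (Z (x(j := t))))"
proof (rule lipschitz_onI[OF _ beta_nonneg])
  fix s t
  have upd: "Z (x(j := t)) \<le> exp (\<beta> * \<bar>t - s\<bar>) * Z (x(j := s))" for s t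
    using Z_upd_le[OF assms, of "x(j := s)" t] by simp
  have "ln (Z (x(j := t))) \<le> \<beta> * \<bar>t - s\<bar> + ln (Z (x(j := s)))"
    by (rule ln_le_add_ln[OF Z_pos Z_pos upd])
  moreover have "ln (Z (x(j := s))) \<le> \<beta> * \<bar>t - s\<bar> + ln (Z (x(j := t)))"
    using ln_le_add_ln[OF Z_pos Z_pos upd[of s t]] by (simp add: abs_minus_commute)
  ultimately show "dist (ln (Z (x(j := t)))) (ln (Z (x(j := s)))) \<le> \<beta> * dist t s"
    by (simp add: dist_real_def)
qed

lemma measurable_ln_Z:
  assumes [measurable]: "\<And>k. k \<in> {1..n} \<Longrightarrow> (\<lambda>\<omega>. f \<omega> k) \<in> borel_measurable M"
  shows "(\<lambda>\<omega>. ln (Z (f \<omega>))) \<in> borel_measurable M"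
proof -
  interpret sigma_finite_measure P by (rule prob_space_imp_sigma_finite) (rule prob_space_axioms)
  have "(\<lambda>(\<omega>, \<sigma>). exp (energy (f \<omega>) \<sigma>) * renewal_delta T n \<sigma>) \<in> borel_measurable (M \<Otimes>\<^sub>M P)"
    unfolding energy_def by measurable
  then have "(\<lambda>\<omega>. Z (f \<omega>)) \<in> borel_measurable M"
    unfolding Z_def by (rule borel_measurable_lebesgue_integral)
  then show ?thesis by measurable
qed

end

section \<open>Martingale increments of the log-partition function\<close>

locale random_pinning = disorder: iid_real_seq Q \<eta> + polymer: renewal_partition P T \<beta> h n
  for Q :: "'w measure" and \<eta> and P :: "'s measure" and T \<beta> h n +
  assumes beta_pos: "\<beta> > 0"
    and integrable_exp_abs_eta: "integrable Q (\<lambda>\<omega>. exp (\<beta> * \<bar>\<eta> 0 \<omega>\<bar>))"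
begin

abbreviation "law \<equiv> disorder.law"
abbreviation "prod_law \<equiv> disorder.prod_law"
abbreviation "Z \<equiv> polymer.Z"

lemma integrable_exp_abs_law: "integrable law (\<lambda>t. exp (\<beta> * \<bar>t\<bar>))"
  using integrable_exp_abs_eta unfolding disorder.law_def by (subst integrable_distr_eq) auto

sublocale moment: exp_moment law \<beta>
  unfolding exp_moment_def exp_moment_axioms_def
  using disorder.prob_space_law beta_pos integrable_exp_abs_law by simp

definition ln_Z_given :: "nat set \<Rightarrow> (nat \<Rightarrow> real) \<Rightarrow> real" where
  "ln_Z_given I a = (\<integral>y. ln (Z (merge I ({1..n} - I) (a, y))) \<partial>prod_law ({1..n} - I))"

lemma measurable_merge_component:
  assumes "k \<in> I \<union> J"
  shows "(\<lambda>y. merge I J (a, y) k) \<in> borel_measurable (prod_law J)"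
  using assms by (cases "k \<in> I") (auto simp: merge_def)

lemma integrable_ln_Z_merge:
  assumes "I \<subseteq> {1..n}"
  shows "integrable (prod_law ({1..n} - I)) (\<lambda>y. ln (Z (merge I ({1..n} - I) (a, y))))"
proof -
  define J where "J = {1..n} - I"
  have fin: "finite I" "finite J" using assms by (auto simp: J_def intro: finite_subset)
  have disj: "I \<inter> J = {}" and IJ: "I \<union> J = {1..n}" using assms by (auto simp: J_def)
  define c where "c = \<beta> * (\<Sum>k\<in>I. \<bar>a k\<bar>) + n * \<bar>h\<bar> - ln polymer.pinning_prob"
  have bound: "\<bar>ln (Z (merge I J (a, y)))\<bar> \<le> c + \<beta> * (\<Sum>k\<in>J. \<bar>y k\<bar>)" for y
  proof -
    have "(\<Sum>k\<in>{1..n}. \<bar>merge I J (a, y) k\<bar>) = (\<Sum>k\<in>I. \<bar>a k\<bar>) + (\<Sum>k\<in>J. \<bar>y k\<bar>)"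
      unfolding IJ[symmetric] sum.union_disjoint[OF fin disj]
      using disj by (auto simp: merge_def intro!: sum.cong arg_cong2[where f="(+)"])
    then show ?thesis
      using polymer.abs_ln_Z_le[of "merge I J (a, y)"]
      by (simp add: c_def polymer.energy_bound_def distrib_left)
  qed
  interpret J: prob_space "prod_law J" by (rule disorder.prob_space_prod_law)
  have "integrable (prod_law J) (\<lambda>y. c + \<beta> * (\<Sum>k\<in>J. \<bar>y k\<bar>))"
    using moment.integrable_abs_diff[of 0]
    by (auto intro!: Bochner_Integration.integrable_sum disorder.integrable_component)
  then show ?thesis
    unfolding J_def[symmetric]
  proof (rule Bochner_Integration.integrable_bound)
    show "(\<lambda>y. ln (Z (merge I J (a, y)))) \<in> borel_measurable (prod_law J)"
      using IJ by (intro polymer.measurable_ln_Z measurable_merge_component) auto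
    show "AE y in prod_law J. norm (ln (Z (merge I J (a, y)))) \<le> norm (c + \<beta> * (\<Sum>k\<in>J. \<bar>y k\<bar>))"
      using bound by (auto intro!: AE_I2 order_trans[OF _ abs_ge_self])
  qed
qed

lemma ln_Z_given_split_coord:
  assumes I: "I \<subseteq> {1..n}" and j: "j \<in> {1..n} - I" and ab: "\<And>k. k \<in> I \<Longrightarrow> a k = b k"
  defines "J \<equiv> {1..n} - insert j I"
  shows "ln_Z_given I b = (\<integral>y. (\<integral>t. ln (Z ((merge (insert j I) J (a, y))(j := t))) \<partial>law) \<partial>prod_law J)"
proof -
  have J0: "{1..n} - I = insert j J" and J: "finite J" "j \<notin> J"
    using j by (auto simp: J_def)
  have "ln_Z_given I b = (\<integral>y. (\<integral>t. ln (Z (merge I (insert j J) (b, y(j := t)))) \<partial>law) \<partial>prod_law J)"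
    unfolding ln_Z_given_def J0
    by (rule disorder.law.product_integral_insert[OF J]) (use integrable_ln_Z_merge[OF I, of b] J0 in simp)
  also have "\<dots> = (\<integral>y. (\<integral>t. ln (Z ((merge (insert j I) J (a, y))(j := t))) \<partial>law) \<partial>prod_law J)"
    using ab j by (intro Bochner_Integration.integral_cong refl arg_cong[where f=ln] polymer.Z_local)
      (auto simp: merge_def J_def)
  finally show ?thesis .
qed

lemma measurable_integral_ln_Z_upd:
  assumes "\<And>k. k \<in> {1..n} \<Longrightarrow> (\<lambda>y. z y k) \<in> borel_measurable M"
  shows "(\<lambda>y. \<integral>t. ln (Z ((z y)(j := t))) \<partial>law) \<in> borel_measurable M"
proof -
  have "(\<lambda>p. ln (Z ((z (fst p))(j := snd p)))) \<in> borel_measurable (M \<Otimes>\<^sub>M law)"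
  proof (rule polymer.measurable_ln_Z)
    fix k assume "k \<in> {1..n}"
    then show "(\<lambda>p. ((z (fst p))(j := snd p)) k) \<in> borel_measurable (M \<Otimes>\<^sub>M law)"
      using assms by (cases "k = j") simp_all
  qed
  then have "(\<lambda>(y, t). ln (Z ((z y)(j := t)))) \<in> borel_measurable (M \<Otimes>\<^sub>M law)"
    by (simp add: case_prod_beta')
  then show ?thesis
    by (rule sigma_finite_measure.borel_measurable_lebesgue_integral[OF
          prob_space_imp_sigma_finite[OF disorder.prob_space_law]])
qed

lemma abs_ln_Z_given_insert_diff_le:
  assumes I: "I \<subseteq> {1..n}" and j: "j \<in> {1..n} - I" and ab: "\<And>k. k \<in> I \<Longrightarrow> a k = b k"
  shows "\<bar>ln_Z_given (insert j I) a - ln_Z_given I b\<bar> \<le> (\<integral>t. \<beta> * \<bar>a j - t\<bar> \<partial>law)"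
proof -
  define J where "J = {1..n} - insert j I"
  define z where "z y = merge (insert j I) J (a, y)" for y
  define G where "G y = (\<integral>t. ln (Z ((z y)(j := t))) \<partial>law)" for y
  define c where "c = (\<integral>t. \<beta> * \<bar>a j - t\<bar> \<partial>law)"
  interpret J: prob_space "prod_law J" by (rule disorder.prob_space_prod_law)
  have dev: "\<bar>ln (Z (z y)) - G y\<bar> \<le> c" for y
  proof -
    have "z y = (z y)(j := a j)" by (simp add: z_def merge_def fun_eq_iff)
    then show ?thesis
      using moment.lipschitz_dist_integral_le[OF polymer.lipschitz_ln_Z_coord, of j "z y" "a j"] j
      by (simp add: G_def c_def)
  qed
  have int_ln_Z: "integrable (prod_law J) (\<lambda>y. ln (Z (z y)))"
    using integrable_ln_Z_merge[of "insert j I" a] I j by (simp add: z_def J_def)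
  have "(\<lambda>y. z y k) \<in> borel_measurable (prod_law J)" if "k \<in> {1..n}" for k
    unfolding z_def using that by (intro measurable_merge_component) (auto simp: J_def)
  then have "G \<in> borel_measurable (prod_law J)"
    unfolding G_def by (rule measurable_integral_ln_Z_upd)
  then have int_dev: "integrable (prod_law J) (\<lambda>y. ln (Z (z y)) - G y)"
    using int_ln_Z dev by (intro J.integrable_const_bound[where B=c]) auto
  have "ln_Z_given (insert j I) a - ln_Z_given I b = (\<integral>y. ln (Z (z y)) \<partial>prod_law J) - (\<integral>y. G y \<partial>prod_law J)"
    using ln_Z_given_split_coord[OF I j ab] by (simp add: ln_Z_given_def z_def G_def J_def)
  also have "\<dots> = (\<integral>y. ln (Z (z y)) - G y \<partial>prod_law J)"
  proof -
    have "integrable (prod_law J) G"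
      using Bochner_Integration.integrable_diff[OF int_ln_Z int_dev] by simp
    then show ?thesis
      using int_ln_Z by (simp add: Bochner_Integration.integral_diff)
  qed
  also have "\<bar>\<dots>\<bar> \<le> (\<integral>y. \<bar>ln (Z (z y)) - G y\<bar> \<partial>prod_law J)"
    by (rule integral_abs_bound)
  also have "\<dots> \<le> (\<integral>y. c \<partial>prod_law J)"
    using int_dev dev by (intro integral_mono) auto
  finally show ?thesis by (simp add: c_def J.prob_space)
qed

lemma integrable_ln_Z: "integrable (prod_law {1..n}) (\<lambda>x. ln (Z x))"
proof -
  have "Z (merge {} {1..n} (undefined, y)) = Z y" for y
    by (rule polymer.Z_local) (simp add: merge_def)
  then show ?thesis
    using integrable_ln_Z_merge[of "{}" undefined] by simp
qed

lemma cond_exp_ln_partition_fn: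
  assumes "j \<le> n"
  shows "AE \<omega> in Q. real_cond_exp Q (disorder_filtration Q \<eta> j) (\<lambda>\<omega>. ln (partition_fn P T \<eta> \<beta> h n \<omega>)) \<omega>
           = ln_Z_given {1..j} (disorder.coords {1..j} \<omega>)"
proof -
  have "partition_fn P T \<eta> \<beta> h n \<omega> = Z (disorder.coords {1..n} \<omega>)" for \<omega>
    unfolding polymer.partition_fn_eq_Z by (rule polymer.Z_local) (simp add: disorder.coords_def)
  then show ?thesis
    using disorder.cond_exp_coords[OF _ _ integrable_ln_Z, of "{1..j}"] assms
    by (simp add: disorder_filtration_eq_sigma_vars ln_Z_given_def)
qed

definition increment :: "nat \<Rightarrow> 'w \<Rightarrow> real" where
  "increment j \<omega> =
     real_cond_exp Q (disorder_filtration Q \<eta> j) (\<lambda>\<omega>. ln (partition_fn P T \<eta> \<beta> h n \<omega>)) \<omega>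
   - real_cond_exp Q (disorder_filtration Q \<eta> (j - 1)) (\<lambda>\<omega>. ln (partition_fn P T \<eta> \<beta> h n \<omega>)) \<omega>"

lemma abs_increment_le:
  assumes j: "j \<in> {1..n}"
  shows "AE \<omega> in Q. \<bar>increment j \<omega>\<bar> \<le> (\<integral>t. \<beta> * \<bar>\<eta> j \<omega> - t\<bar> \<partial>law)"
proof -
  have jn: "j \<le> n" "j - 1 \<le> n" and split: "insert j {1..j - 1} = {1..j}"
    using j by auto
  have bound: "\<bar>ln_Z_given {1..j} (disorder.coords {1..j} \<omega>)
      - ln_Z_given {1..j - 1} (disorder.coords {1..j - 1} \<omega>)\<bar> \<le> (\<integral>t. \<beta> * \<bar>\<eta> j \<omega> - t\<bar> \<partial>law)" for \<omega>
  proof -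
    have "\<bar>ln_Z_given (insert j {1..j - 1}) (disorder.coords {1..j} \<omega>)
           - ln_Z_given {1..j - 1} (disorder.coords {1..j - 1} \<omega>)\<bar>
        \<le> (\<integral>t. \<beta> * \<bar>disorder.coords {1..j} \<omega> j - t\<bar> \<partial>law)"
      by (rule abs_ln_Z_given_insert_diff_le) (use j in \<open>auto simp: disorder.coords_def\<close>)
    then show ?thesis
      unfolding split using j by (simp add: disorder.coords_def)
  qed
  show ?thesis
    using cond_exp_ln_partition_fn[OF jn(1)] cond_exp_ln_partition_fn[OF jn(2)]
    by eventually_elim (simp only: increment_def bound)
qed

lemma exp_moment_product_le_max:
  "2 * (\<integral>t. exp (\<beta> * t) \<partial>law) * (\<integral>t. exp (- \<beta> * t) \<partial>law)
     \<le> 2 * max (exp (h + log_mgf Q (\<eta> 0) \<beta>)) 1 * max (exp (- h + log_mgf Q (\<eta> 0) (- \<beta>))) 1"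
proof -
  define A where "A = (\<integral>t. exp (\<beta> * t) \<partial>law)"
  define B where "B = (\<integral>t. exp (- \<beta> * t) \<partial>law)"
  have "A > 0" "B > 0"
    unfolding A_def B_def by (auto intro!: moment.expectation_greater)
  have log_mgf_law: "log_mgf Q (\<eta> 0) s = ln (\<integral>t. exp (s * t) \<partial>law)" for s
    unfolding log_mgf_def disorder.law_def by (subst integral_distr) auto
  have eq: "exp (h + log_mgf Q (\<eta> 0) \<beta>) = exp h * A" "exp (- h + log_mgf Q (\<eta> 0) (- \<beta>)) = exp (- h) * B"
    unfolding log_mgf_law exp_add using \<open>A > 0\<close> \<open>B > 0\<close> by (simp_all add: A_def B_def)
  have "A * B = (exp h * A) * (exp (- h) * B)"
    by (simp add: exp_minus field_simps)
  also have "\<dots> \<le> max (exp h * A) 1 * max (exp (- h) * B) 1"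
    using \<open>A > 0\<close> \<open>B > 0\<close> by (intro mult_mono) auto
  finally show ?thesis
    unfolding eq by (simp add: A_def B_def)
qed

lemma cond_exp_exp_abs_increment_le:
  assumes j: "j \<in> {1..n}"
  shows "AE \<omega> in Q. real_cond_exp Q (disorder_filtration Q \<eta> (j - 1)) (\<lambda>\<omega>. exp \<bar>increment j \<omega>\<bar>) \<omega>
           \<le> 2 * max (exp (h + log_mgf Q (\<eta> 0) \<beta>)) 1 * max (exp (- h + log_mgf Q (\<eta> 0) (- \<beta>))) 1"
proof -
  let ?F = "disorder_filtration Q \<eta> (j - 1)"
  let ?\<psi> = "moment.exp_dist_moment"
  interpret F: finite_measure_subalgebra Q ?F
    unfolding disorder_filtration_eq_sigma_vars by (rule disorder.finite_measure_subalgebra_sigma_vars)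
  have exp_bound: "AE \<omega> in Q. exp \<bar>increment j \<omega>\<bar> \<le> ?\<psi> (\<eta> j \<omega>)"
    using abs_increment_le[OF j]
    by eventually_elim (rule order_trans[OF _ moment.exp_integral_le_exp_dist_moment], simp)
  have int_\<psi>: "integrable Q (\<lambda>\<omega>. ?\<psi> (\<eta> j \<omega>))"
    using moment.integrable_exp_dist_moment
    by (subst (asm) disorder.distr_eta[of j, symmetric]) (simp add: integrable_distr_eq)
  have "increment j \<in> borel_measurable Q"
    unfolding increment_def by measurable
  then have int_exp: "integrable Q (\<lambda>\<omega>. exp \<bar>increment j \<omega>\<bar>)"
    using exp_bound by (intro Bochner_Integration.integrable_bound[OF int_\<psi>]) (auto elim: eventually_mono)
  have "AE \<omega> in Q. real_cond_exp Q ?F (\<lambda>\<omega>. exp \<bar>increment j \<omega>\<bar>) \<omega> \<le> real_cond_exp Q ?F (\<lambda>\<omega>. ?\<psi> (\<eta> j \<omega>)) \<omega>"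
    by (rule F.real_cond_exp_mono[OF exp_bound int_exp int_\<psi>])
  moreover have "AE \<omega> in Q. real_cond_exp Q ?F (\<lambda>\<omega>. ?\<psi> (\<eta> j \<omega>)) \<omega> = (\<integral>s. ?\<psi> s \<partial>law)"
    unfolding disorder_filtration_eq_sigma_vars using j
    by (intro disorder.cond_exp_indep_coord moment.integrable_exp_dist_moment) auto
  moreover note order_trans[OF moment.integral_exp_dist_moment_le exp_moment_product_le_max]
  ultimately show ?thesis
    by (auto elim: eventually_mono)
qed

end

theorem lemma3p1:
  fixes P :: "'s measure" and T :: "nat \<Rightarrow> 's \<Rightarrow> enat"
    and Q :: "'w measure" and \<eta> :: "nat \<Rightarrow> 'w \<Rightarrow> real"
    and \<beta> h :: real and n :: nat
  assumes P: "prob_space P"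
    and T_indep: "prob_space.indep_vars P (\<lambda>_. count_space UNIV) T UNIV"
    and T_id: "\<And>i. distr P (count_space UNIV) (T i) = distr P (count_space UNIV) (T 0)"
    and T_pos: "\<And>i. AE \<sigma> in P. T i \<sigma> \<ge> 1"
    and Q: "prob_space Q"
    and \<eta>_indep: "prob_space.indep_vars Q (\<lambda>_. borel) \<eta> UNIV"
    and \<eta>_id: "\<And>i. distr Q borel (\<eta> i) = distr Q borel (\<eta> 0)"
    and \<beta>: "\<beta> > 0"
    and mom: "integrable Q (\<lambda>\<omega>. exp (\<beta> * \<bar>\<eta> 0 \<omega>\<bar>))"
    and n: "n \<ge> 1"
    and pos: "measure P {\<sigma> \<in> space P. renewal_delta T n \<sigma> = 1} > 0"
  shows "\<forall>j\<in>{1..n}.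
     (let F = disorder_filtration Q \<eta>;
          lnZ = (\<lambda>\<omega>. ln (partition_fn P T \<eta> \<beta> h n \<omega>));
          V = (\<lambda>\<omega>. real_cond_exp Q (F j) lnZ \<omega> - real_cond_exp Q (F (j - 1)) lnZ \<omega>);
          K = 2 * max (exp (h + log_mgf Q (\<eta> 0) \<beta>)) 1 * max (exp (- h + log_mgf Q (\<eta> 0) (- \<beta>))) 1
      in AE \<omega> in Q. real_cond_exp Q (F (j - 1)) (\<lambda>\<omega>. exp \<bar>V \<omega>\<bar>) \<omega> \<le> K)"
proof -
  have "\<And>i. T i \<in> measurable P (count_space UNIV)"
    using T_indep unfolding prob_space.indep_vars_def[OF P] by blast
  then interpret random_pinning Q \<eta> P T \<beta> h n
    using P Q \<eta>_indep \<eta>_id \<beta> mom pos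
    by (simp add: random_pinning_def random_pinning_axioms_def iid_real_seq_def iid_real_seq_axioms_def
        renewal_partition_def renewal_partition_axioms_def)
  show ?thesis
    using cond_exp_exp_abs_increment_le unfolding Let_def increment_def by blast
qed

end
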